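(* Let $S$ be a memory system satisfying the Causality and Data Independence assumptions, let $n,m\ge1$, let $\Omega$ be the simple witness for $S(n,m)$, and let $1\le k\le\min\{n,m\}$. Then there is an unambiguous trace $\tau$ of $S(n,m)$ such that $G(\Omega)(\tau)$ has a canonical $k$-nice cycle if and only if there is a trace $\tau'$ of $S(n,m,2)$ such that $\tau'\in Constrain_k(j)$ for all $1\le j\le m$ and $\tau'\in Check_k(i)$ for all $1\le i\le k$.
   Context: Notation: $\mathbb{N}_n=\{1,\dots,n\}$, $\mathbb{W}_n=\{0,\dots,n\}$, $\mathbb{W}=\{0,1,2,\dots\}$. Memory events $E(n,m,v)=\{R,W\}\times\mathbb{N}_n\times\mathbb{N}_m\times\mathbb{W}_v$; for $e=\langle a,b,c,d\rangle$, $op(e)=a$, $proc(e)=b$, $loc(e)=c$, $data(e)=d$; $0$ models the initial value of every location. A memory system is a family $S=(S(n,m,v))_{n,m,v\ge1}$, $S(n,m,v)$ a regular set of finite runs over an alphabet $E^a(n,m,v)\supseteq E(n,m,v)$ (other letters are internal events); $S(n,m)=\bigcup_{v\ge1}S(n,m,v)$. The trace of a run is its subsequence of memory events; traces of $S(n,m,v)$ (resp. $S(n,m)$) are traces of its runs. For a sequence $\tau$ of memory events with positions $1,\dots,|\tau|$: $P(\tau,i)=\{k: proc(\tau(k))=i\}$, $L(\tau,j)=\{k: loc(\tau(k))=j\}$, $L^w(\tau,j)$, $L^r(\tau,j)$ the write/read positions in $L(\tau,j)$, $M(\tau,i)=\{\langle u,v\rangle: u,v\in P(\tau,i), u<v\}$.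 $\tau$ is unambiguous if for every $j$ and $x\in L^w(\tau,j)$, $data(\tau(x))\ne0$ and $data(\tau(x))\ne data(\tau(y))$ for all $y\in L^w(\tau,j)\setminus\{x\}$. Causality: for all $n,m,v$, every trace $\tau$ of $S(n,m,v)$, every $j$ and $x\in L^r(\tau,j)$, either $data(\tau(x))=0$ or some $y\in L^w(\tau,j)$ has $data(\tau(y))=data(\tau(x))$. Data Independence: with renaming functions $\lambda:\mathbb{N}_m\times\mathbb{W}\to\mathbb{W}$, $\lambda(j,0)=0$, and $\lambda^d(\langle a,b,c,d\rangle)=\langle a,b,c,\lambda(c,d)\rangle$ letterwise, for all $n,m,v$ and $\tau\in E(n,m,v)^*$: $\tau$ is a trace of $S(n,m,v)$ iff $\tau=\lambda^d(\tau')$ for some unambiguous trace $\tau'$ of $S(n,m)$ and renaming function $\lambda$ with values in $\mathbb{W}_v$. The simple witness $\Omega$ assigns to each trace $\tau$ and location $j$ the order $\Omega(\tau,j)=\{\langle x,y\rangle: x,y\in L^w(\tau,j), x<y\}$. For unambiguous $\tau$: $\langle x,y\rangle\in\Omega^e(\tau,j)$ (for $x,y\in L(\tau,j)$) iff (1) $data(\tau(x))=data(\tau(y))$, $op(\tau(x))=W$, $op(\tau(y))=R$; or (2) $data(\tau(x))=0\ne data(\tau(y))$; or (3) some $a,b\in L^w(\tau,j)$ have $\langle a,b\rangle\in\Omega(\tau,j)$, $data(\tau(a))=data(\tau(x))$, $data(\tau(b))=data(\tau(y))$. $G(\Omega)(\tau)$ is the directed graph on $\{1,\dots,|\tau|\}$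 with edges $\bigcup_iM(\tau,i)\cup\bigcup_j\Omega^e(\tau,j)$. With $x\oplus1=x+1$ for $x<k$ and $k\oplus1=1$, a canonical $k$-nice cycle in $G(\Omega)(\tau)$ is a sequence $u_1,v_1,\dots,u_k,v_k$ of pairwise distinct vertices with $\langle u_x,v_x\rangle\in M(\tau,x)$ and $\langle v_x,u_{x\oplus1}\rangle\in\Omega^e(\tau,x\oplus1)$ for all $1\le x\le k$. Languages over $E(n,m,2)$: for $1\le j\le k$, $Constrain_k(j)$ is the set of sequences whose subsequence of write events to location $j$ (events $e$ with $op(e)=W$, $loc(e)=j$) has data-value sequence in $0^*\cup 0^*1\,2^*$ (i.e. it is accepted by the automaton with states $a$ (initial) and $b$, both accepting, that ignores all other events, loops on $a$ for data $0$, goes $a\to b$ on data $1$, loops on $b$ for data $2$, and has no other transitions). For $k<j\le m$, $Constrain_k(j)$ is the set of sequences in which every write event to location $j$ has data value $0$. For $1\le i\le k$, $Check_k(i)$ is the set of sequences $\tau$ over $E(n,m,2)$ having positions $x<y$ such that $proc(\tau(x))=i$, $loc(\tau(x))=i$, $data(\tau(x))\in\{1,2\}$, and $proc(\tau(y))=i$, $loc(\tau(y))=i\oplus1$, and either $data(\tau(y))=0$ or ($op(\tau(y))=W$ and $data(\tau(y))=1$). *)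

theory Defs
  imports Main
begin

datatype opk = R | W

datatype event = Ev (op: opk) (proc: nat) (loc: nat) (data: nat)

definition E :: "nat \<Rightarrow> nat \<Rightarrow> nat \<Rightarrow> event set" where
  "E n m v = {e. proc e \<in> {1..n} \<and> loc e \<in> {1..m} \<and> data e \<le> v}"

datatype 'i letter = Mem event | Internal 'i

fun trace :: "'i letter list \<Rightarrow> event list" where
  "trace [] = []"
| "trace (Mem e # w) = e # trace w"
| "trace (Internal _ # w) = trace w"

fun reach :: "(nat \<times> 'a \<times> nat) set \<Rightarrow> nat \<Rightarrow> 'a list \<Rightarrow> nat set" where
  "reach \<delta> q [] = {q}"
| "reach \<delta> q (a # w) = \<Union>{reach \<delta> q' w | q'. (q, a, q') \<in> \<delta>}"

definition regular_over :: "'a set \<Rightarrow> 'a list set \<Rightarrow> bool" where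
  "regular_over A L \<longleftrightarrow> finite A \<and> L \<subseteq> lists A \<and>
     (\<exists>(Q::nat set) q0 \<delta> F. finite Q \<and> q0 \<in> Q \<and> F \<subseteq> Q \<and>
        (\<forall>(p, a, q) \<in> \<delta>. p \<in> Q \<and> a \<in> A \<and> q \<in> Q) \<and>
        L = {w. w \<in> lists A \<and> reach \<delta> q0 w \<inter> F \<noteq> {}})"

type_synonym 'i memsys = "nat \<Rightarrow> nat \<Rightarrow> nat \<Rightarrow> 'i letter list set"

definition memory_system :: "'i memsys \<Rightarrow> bool" where
  "memory_system S \<longleftrightarrow> (\<forall>n m v. n \<ge> 1 \<longrightarrow> m \<ge> 1 \<longrightarrow> v \<ge> 1 \<longrightarrow>
     (\<exists>Ai. regular_over (Mem ` E n m v \<union> Internal ` Ai) (S n m v)))"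

definition traces_v :: "'i memsys \<Rightarrow> nat \<Rightarrow> nat \<Rightarrow> nat \<Rightarrow> event list set" where
  "traces_v S n m v = trace ` S n m v"

definition traces :: "'i memsys \<Rightarrow> nat \<Rightarrow> nat \<Rightarrow> event list set" where
  "traces S n m = (\<Union>v\<in>{1..}. traces_v S n m v)"

section \<open>Positions (0-based indices into the list)\<close>

definition Pos :: "event list \<Rightarrow> nat set" where "Pos \<tau> = {..<length \<tau>}"
definition P :: "event list \<Rightarrow> nat \<Rightarrow> nat set" where
  "P \<tau> i = {k \<in> Pos \<tau>. proc (\<tau> ! k) = i}"
definition L :: "event list \<Rightarrow> nat \<Rightarrow> nat set" where
  "L \<tau> j = {k \<in> Pos \<tau>. loc (\<tau> ! k) = j}"
definition Lw :: "event list \<Rightarrow> nat \<Rightarrow> nat set" where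
  "Lw \<tau> j = {k \<in> L \<tau> j. op (\<tau> ! k) = W}"
definition Lr :: "event list \<Rightarrow> nat \<Rightarrow> nat set" where
  "Lr \<tau> j = {k \<in> L \<tau> j. op (\<tau> ! k) = R}"
definition M :: "event list \<Rightarrow> nat \<Rightarrow> (nat \<times> nat) set" where
  "M \<tau> i = {(u, v). u \<in> P \<tau> i \<and> v \<in> P \<tau> i \<and> u < v}"

definition unambiguous :: "event list \<Rightarrow> bool" where
  "unambiguous \<tau> \<longleftrightarrow> (\<forall>j. \<forall>x \<in> Lw \<tau> j. data (\<tau> ! x) \<noteq> 0 \<and>
      (\<forall>y \<in> Lw \<tau> j - {x}. data (\<tau> ! x) \<noteq> data (\<tau> ! y)))"

definition causality :: "'i memsys \<Rightarrow> bool" where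
  "causality S \<longleftrightarrow> (\<forall>n m v. n \<ge> 1 \<longrightarrow> m \<ge> 1 \<longrightarrow> v \<ge> 1 \<longrightarrow>
     (\<forall>\<tau> \<in> traces_v S n m v. \<forall>j. \<forall>x \<in> Lr \<tau> j.
        data (\<tau> ! x) = 0 \<or> (\<exists>y \<in> Lw \<tau> j. data (\<tau> ! y) = data (\<tau> ! x))))"

definition renaming :: "nat \<Rightarrow> nat \<Rightarrow> (nat \<Rightarrow> nat \<Rightarrow> nat) \<Rightarrow> bool" where
  "renaming m v lam \<longleftrightarrow> (\<forall>j \<in> {1..m}. lam j 0 = 0 \<and> (\<forall>d. lam j d \<le> v))"

definition rename_data :: "(nat \<Rightarrow> nat \<Rightarrow> nat) \<Rightarrow> event list \<Rightarrow> event list" where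
  "rename_data lam \<tau> = map (\<lambda>e. Ev (op e) (proc e) (loc e) (lam (loc e) (data e))) \<tau>"

definition data_independence :: "'i memsys \<Rightarrow> bool" where
  "data_independence S \<longleftrightarrow> (\<forall>n m v. n \<ge> 1 \<longrightarrow> m \<ge> 1 \<longrightarrow> v \<ge> 1 \<longrightarrow>
     (\<forall>\<tau> \<in> lists (E n m v).
        \<tau> \<in> traces_v S n m v \<longleftrightarrow>
        (\<exists>\<tau>' lam. \<tau>' \<in> traces S n m \<and> unambiguous \<tau>' \<and> renaming m v lam \<and>
                 \<tau> = rename_data lam \<tau>')))"

definition Omega :: "event list \<Rightarrow> nat \<Rightarrow> (nat \<times> nat) set" where
  "Omega \<tau> j = {(x, y). x \<in> Lw \<tau> j \<and> y \<in> Lw \<tau> j \<and> x < y}"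

definition Omega_e :: "event list \<Rightarrow> nat \<Rightarrow> (nat \<times> nat) set" where
  "Omega_e \<tau> j = {(x, y). x \<in> L \<tau> j \<and> y \<in> L \<tau> j \<and>
     ((data (\<tau> ! x) = data (\<tau> ! y) \<and> op (\<tau> ! x) = W \<and> op (\<tau> ! y) = R)
      \<or> (data (\<tau> ! x) = 0 \<and> data (\<tau> ! y) \<noteq> 0)
      \<or> (\<exists>a b. a \<in> Lw \<tau> j \<and> b \<in> Lw \<tau> j \<and> (a, b) \<in> Omega \<tau> j \<and>
              data (\<tau> ! a) = data (\<tau> ! x) \<and> data (\<tau> ! b) = data (\<tau> ! y)))}"

definition G_edges :: "event list \<Rightarrow> (nat \<times> nat) set" where
  "G_edges \<tau> = (\<Union>i. M \<tau> i) \<union> (\<Union>j. Omega_e \<tau> j)"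

definition oplus :: "nat \<Rightarrow> nat \<Rightarrow> nat" where
  "oplus k x = (if x < k then x + 1 else 1)"

definition canonical_nice_cycle :: "nat \<Rightarrow> event list \<Rightarrow> (nat \<Rightarrow> nat) \<Rightarrow> (nat \<Rightarrow> nat) \<Rightarrow> bool" where
  "canonical_nice_cycle k \<tau> u v \<longleftrightarrow>
     inj_on u {1..k} \<and> inj_on v {1..k} \<and> u ` {1..k} \<inter> v ` {1..k} = {} \<and>
     (\<forall>x \<in> {1..k}. (u x, v x) \<in> M \<tau> x \<and> (v x, u (oplus k x)) \<in> Omega_e \<tau> (oplus k x))"

definition has_canonical_nice_cycle :: "nat \<Rightarrow> event list \<Rightarrow> bool" where
  "has_canonical_nice_cycle k \<tau> \<longleftrightarrow> (\<exists>u v. canonical_nice_cycle k \<tau> u v)"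

definition write_data :: "nat \<Rightarrow> event list \<Rightarrow> nat list" where
  "write_data j \<tau> = map data (filter (\<lambda>e. op e = W \<and> loc e = j) \<tau>)"

definition Constrain :: "nat \<Rightarrow> nat \<Rightarrow> nat \<Rightarrow> nat \<Rightarrow> event list set" where
  "Constrain n m k j = {\<tau>. \<tau> \<in> lists (E n m 2) \<and>
     (if 1 \<le> j \<and> j \<le> k then
        (\<exists>a. write_data j \<tau> = replicate a 0) \<or>
        (\<exists>a c. write_data j \<tau> = replicate a 0 @ [1] @ replicate c 2)
      else (\<forall>e \<in> set \<tau>. op e = W \<and> loc e = j \<longrightarrow> data e = 0))}"

definition Check :: "nat \<Rightarrow> nat \<Rightarrow> nat \<Rightarrow> nat \<Rightarrow> event list set" where
  "Check n m k i = {\<tau>. \<tau> \<in> lists (E n m 2) \<and>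
     (\<exists>x y. x < y \<and> y < length \<tau> \<and>
        proc (\<tau> ! x) = i \<and> loc (\<tau> ! x) = i \<and> data (\<tau> ! x) \<in> {1, 2} \<and>
        proc (\<tau> ! y) = i \<and> loc (\<tau> ! y) = oplus k i \<and>
        (data (\<tau> ! y) = 0 \<or> (op (\<tau> ! y) = W \<and> data (\<tau> ! y) = 1)))}"

end

theory Submission
  imports Defs
begin

(* Forward direction: for each location j <= k pick the pivot write w_j whose value is the one
   seen at u_j.  The Omega^e-edge from v_(j-1) to u_j then says that v_(j-1) holds the initial
   value, is w_j itself, or holds a value written before w_j.  Renaming the pivot value to 1,
   values of later writes to 2 and everything else to 0 gives, by data independence, a trace of
   S(n,m,2) whose writes to each j read 0*12*, and the cycle positions witness Check.
   Backward direction: data independence turns the 2-valued trace back into a renamed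
   unambiguous trace.  As the renamed writes to j read 0*12*, a position renamed to 0, or a
   write renamed to 1, has an Omega^e-edge to every other position of location j renamed to 1
   or 2; hence the positions witnessing Check form a canonical nice cycle. *)

lemma sorted_wrt_filter_nth:
  "sorted_wrt r (filter Q xs) \<Longrightarrow> i < j \<Longrightarrow> j < length xs \<Longrightarrow> Q (xs ! i) \<Longrightarrow> Q (xs ! j)
   \<Longrightarrow> r (xs ! i) (xs ! j)"
proof (induction xs arbitrary: i j)
  case Nil
  then show ?case by simp
next
  case (Cons a xs)
  then obtain j' where j: "j = Suc j'" by (cases j) auto
  show ?case
  proof (cases i)
    case 0
    have "xs ! j' \<in> set (filter Q xs)" using Cons j by auto
    then show ?thesis using Cons 0 j by auto
  next
    case (Suc i')
    have "sorted_wrt r (filter Q xs)" using Cons.prems(1) by (cases "Q a") auto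
    then show ?thesis using Cons Suc j by auto
  qed
qed

lemma map_filter_eq_three_blocks:
  assumes "i < length xs" "Q (xs ! i)"
    and "\<And>p. p < length xs \<Longrightarrow> Q (xs ! p) \<Longrightarrow> f (xs ! p) = (if p < i then a else if p = i then b else c)"
  shows "\<exists>r s. map f (filter Q xs) = replicate r a @ [b] @ replicate s c"
proof -
  have "\<forall>y \<in> set (map f (filter Q (take i xs))). y = a"
    using assms(1,3) by (auto simp: in_set_conv_nth)
  then have before: "map f (filter Q (take i xs)) = replicate (length (filter Q (take i xs))) a"
    by (metis length_map replicate_length_same)
  have "\<forall>y \<in> set (map f (filter Q (drop (Suc i) xs))). y = c"
    using assms(3) by (auto simp: in_set_conv_nth)
  then have after: "map f (filter Q (drop (Suc i) xs)) = replicate (length (filter Q (drop (Suc i) xs))) c"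
    by (metis length_map replicate_length_same)
  have "f (xs ! i) = b" using assms(1-3) by simp
  moreover have "xs = take i xs @ xs ! i # drop (Suc i) xs"
    using assms(1) by (simp add: id_take_nth_drop)
  ultimately have "map f (filter Q xs) = map f (filter Q (take i xs)) @ [b] @ map f (filter Q (drop (Suc i) xs))"
    using assms(2) by (metis filter.simps(2) filter_append list.simps(9) map_append append_Cons append_Nil)
  then show ?thesis using before after by metis
qed

lemma trace_in_lists: "r \<in> lists (Mem ` A \<union> Internal ` B) \<Longrightarrow> trace r \<in> lists A"
  by (induction r rule: trace.induct) auto

lemma traces_v_in_lists_E:
  assumes "memory_system S" "n \<ge> 1" "m \<ge> 1" "v \<ge> 1" "\<tau> \<in> traces_v S n m v"
  shows "\<tau> \<in> lists (E n m v)"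
proof -
  obtain Ai where "regular_over (Mem ` E n m v \<union> Internal ` Ai) (S n m v)"
    using assms(1-4) unfolding memory_system_def by blast
  then have "S n m v \<subseteq> lists (Mem ` E n m v \<union> Internal ` Ai)"
    unfolding regular_over_def by blast
  then show ?thesis using assms(5) trace_in_lists unfolding traces_v_def by blast
qed

lemma traces_v_iff_renamed:
  assumes "memory_system S" "data_independence S" "n \<ge> 1" "m \<ge> 1" "v \<ge> 1"
  shows "\<tau>' \<in> traces_v S n m v \<longleftrightarrow> \<tau>' \<in> lists (E n m v) \<and>
    (\<exists>\<tau> lam. \<tau> \<in> traces S n m \<and> unambiguous \<tau> \<and> renaming m v lam \<and> \<tau>' = rename_data lam \<tau>)"
  using assms traces_v_in_lists_E unfolding data_independence_def by blast

definition causal :: "event list \<Rightarrow> bool" where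
  "causal \<tau> \<longleftrightarrow> (\<forall>j. \<forall>x \<in> Lr \<tau> j. data (\<tau> ! x) = 0 \<or> (\<exists>y \<in> Lw \<tau> j. data (\<tau> ! y) = data (\<tau> ! x)))"

lemma causality_imp_causal:
  assumes "causality S" "n \<ge> 1" "m \<ge> 1" "\<tau> \<in> traces S n m"
  shows "causal \<tau>"
  using assms unfolding causality_def traces_def causal_def by fastforce

lemma causal_writer:
  assumes "causal \<tau>" "p \<in> L \<tau> j" "data (\<tau> ! p) \<noteq> 0"
  obtains w where "w \<in> Lw \<tau> j" "data (\<tau> ! w) = data (\<tau> ! p)"
proof (cases "op (\<tau> ! p)")
  case R
  then have "p \<in> Lr \<tau> j" using assms(2) unfolding Lr_def by blast
  then show ?thesis using assms(1,3) that unfolding causal_def by metis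
next
  case W
  then show ?thesis using assms that unfolding Lw_def by blast
qed

lemma unambiguous_write_nonzero: "unambiguous \<tau> \<Longrightarrow> x \<in> Lw \<tau> j \<Longrightarrow> data (\<tau> ! x) \<noteq> 0"
  unfolding unambiguous_def by blast

lemma unambiguous_write_eq:
  "unambiguous \<tau> \<Longrightarrow> x \<in> Lw \<tau> j \<Longrightarrow> y \<in> Lw \<tau> j \<Longrightarrow> data (\<tau> ! x) = data (\<tau> ! y) \<Longrightarrow> x = y"
  unfolding unambiguous_def by blast

lemma length_rename_data [simp]: "length (rename_data lam \<tau>) = length \<tau>"
  by (simp add: rename_data_def)

lemma nth_rename_data [simp]:
  "p < length \<tau> \<Longrightarrow> rename_data lam \<tau> ! p =
     Ev (op (\<tau> ! p)) (proc (\<tau> ! p)) (loc (\<tau> ! p)) (lam (loc (\<tau> ! p)) (data (\<tau> ! p)))"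
  by (simp add: rename_data_def)

lemma Lw_rename_data [simp]: "Lw (rename_data lam \<tau>) j = Lw \<tau> j"
  by (auto simp: Lw_def L_def Pos_def)

lemma rename_data_in_lists_E:
  "\<tau> \<in> lists (E n m v) \<Longrightarrow> renaming m v' lam \<Longrightarrow> rename_data lam \<tau> \<in> lists (E n m v')"
  unfolding rename_data_def renaming_def E_def by auto

lemma write_data_rename_data:
  "write_data j (rename_data lam \<tau>) = map (\<lambda>e. lam j (data e)) (filter (\<lambda>e. op e = W \<and> loc e = j) \<tau>)"
  unfolding write_data_def rename_data_def by (induction \<tau>) auto

lemma bij_betw_oplus: "bij_betw (oplus k) {1..k} {1..k}"
  by (rule bij_betw_byWitness[where f' = "\<lambda>j. if j = 1 then k else j - 1"]) (auto simp: oplus_def)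

lemma oplus_mem: "x \<in> {1..k} \<Longrightarrow> oplus k x \<in> {1..k}"
  using bij_betw_oplus by (metis bij_betwE)

(* Over {0,1,2}, the words of 0* and 0*12* are exactly the words sorted by this relation. *)
definition constrain_le :: "nat \<Rightarrow> nat \<Rightarrow> bool" where
  "constrain_le x y \<longleftrightarrow> x \<le> y \<and> \<not> (x = 1 \<and> y = 1)"

lemma sorted_constrain_le_write_data:
  assumes "\<tau> \<in> Constrain n m k j" "j \<in> {1..k}"
  shows "sorted_wrt constrain_le (write_data j \<tau>)"
proof -
  have const: "sorted_wrt constrain_le (replicate a x)" if "x \<noteq> 1" for a x
    using that by (induction a) (auto simp: constrain_le_def)
  have "sorted_wrt constrain_le (replicate a 0 @ [1] @ replicate c 2)" for a c
    by (auto simp: sorted_wrt_append constrain_le_def const)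
  then show ?thesis using assms const[of 0] unfolding Constrain_def by (auto split: if_splits)
qed

lemma Constrain_writes_ordered:
  assumes "\<tau> \<in> Constrain n m k j" "j \<in> {1..k}" "p \<in> Lw \<tau> j" "q \<in> Lw \<tau> j" "p < q"
  shows "constrain_le (data (\<tau> ! p)) (data (\<tau> ! q))"
proof -
  have "sorted_wrt (\<lambda>x y. constrain_le (data x) (data y)) (filter (\<lambda>e. op e = W \<and> loc e = j) \<tau>)"
    using sorted_constrain_le_write_data[OF assms(1,2)] by (simp add: write_data_def sorted_wrt_map)
  from sorted_wrt_filter_nth[OF this assms(5)] show ?thesis
    using assms(3,4) by (auto simp: Lw_def L_def Pos_def)
qed

lemma constrain_le_sorted_less:
  fixes f :: "nat \<Rightarrow> nat"
  assumes "\<And>p q. p \<in> A \<Longrightarrow> q \<in> A \<Longrightarrow> p < q \<Longrightarrow> constrain_le (f p) (f q)"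
    and "p \<in> A" "q \<in> A" "f p < f q"
  shows "p < q"
  using assms(1)[OF assms(3,2)] assms(4) by (cases p q rule: linorder_cases) (auto simp: constrain_le_def)

lemma constrain_le_sorted_unique_one:
  fixes f :: "nat \<Rightarrow> nat"
  assumes "\<And>p q. p \<in> A \<Longrightarrow> q \<in> A \<Longrightarrow> p < q \<Longrightarrow> constrain_le (f p) (f q)"
    and "p \<in> A" "q \<in> A" "f p = 1" "f q = 1"
  shows "p = q"
  using assms(1)[OF assms(2,3)] assms(1)[OF assms(3,2)] assms(4,5)
  by (cases p q rule: linorder_cases) (auto simp: constrain_le_def)

lemma Omega_e_if_ranked:
  assumes "causal \<tau>"
    and ordered: "\<And>p q. p \<in> Lw \<tau> j \<Longrightarrow> q \<in> Lw \<tau> j \<Longrightarrow> p < q \<Longrightarrow>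
                   constrain_le (g (data (\<tau> ! p))) (g (data (\<tau> ! q)))"
    and "g 0 = 0"
    and a: "a \<in> L \<tau> j" and b: "b \<in> L \<tau> j" "a \<noteq> b"
    and gb: "g (data (\<tau> ! b)) \<in> {1, 2}"
    and ga: "g (data (\<tau> ! a)) = 0 \<or> op (\<tau> ! a) = W \<and> g (data (\<tau> ! a)) = 1"
  shows "(a, b) \<in> Omega_e \<tau> j"
proof -
  have less_if_rank_less: "p < q"
    if "p \<in> Lw \<tau> j" "q \<in> Lw \<tau> j" "g (data (\<tau> ! p)) < g (data (\<tau> ! q))" for p q
    using constrain_le_sorted_less[OF ordered that] .
  have unique_one: "p = q"
    if "p \<in> Lw \<tau> j" "q \<in> Lw \<tau> j" "g (data (\<tau> ! p)) = 1" "g (data (\<tau> ! q)) = 1" for p q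
    using constrain_le_sorted_unique_one[OF ordered that] .
  have "data (\<tau> ! b) \<noteq> 0" using gb \<open>g 0 = 0\<close> by (intro notI) simp
  then obtain wb where wb: "wb \<in> Lw \<tau> j" "data (\<tau> ! wb) = data (\<tau> ! b)"
    using causal_writer[OF \<open>causal \<tau>\<close> b(1)] by blast
  show ?thesis
  proof (cases "data (\<tau> ! a) = 0")
    case True
    then show ?thesis using a b \<open>data (\<tau> ! b) \<noteq> 0\<close> unfolding Omega_e_def by auto
  next
    case False
    then obtain wa where wa: "wa \<in> Lw \<tau> j" "data (\<tau> ! wa) = data (\<tau> ! a)"
      using causal_writer[OF \<open>causal \<tau>\<close> a] by blast
    consider (zero) "g (data (\<tau> ! a)) = 0"
      | (one_one) "op (\<tau> ! a) = W" "g (data (\<tau> ! a)) = 1" "g (data (\<tau> ! b)) = 1"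
      | (one_two) "op (\<tau> ! a) = W" "g (data (\<tau> ! a)) = 1" "g (data (\<tau> ! b)) = 2"
      using ga gb by auto
    then show ?thesis
    proof cases
      case zero
      then have "wa < wb" using less_if_rank_less[OF wa(1) wb(1)] wa wb gb by auto
      then show ?thesis using a b wa wb unfolding Omega_e_def Omega_def by blast
    next
      case one_one
      then have aw: "a \<in> Lw \<tau> j" using a unfolding Lw_def by blast
      then have "wb = a" using unique_one[OF wb(1)] one_one wb(2) by simp
      moreover have "op (\<tau> ! b) = R"
        using unique_one[OF aw, of b] one_one b unfolding Lw_def by (cases "op (\<tau> ! b)") auto
      ultimately show ?thesis using a b one_one wb(2) unfolding Omega_e_def by auto
    next
      case one_two
      then have aw: "a \<in> Lw \<tau> j" using a unfolding Lw_def by blast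
      then have "a < wb" using less_if_rank_less[OF aw wb(1)] one_two wb(2) by simp
      then show ?thesis using a b aw wb unfolding Omega_e_def Omega_def by blast
    qed
  qed
qed

lemma Omega_e_source_write:
  assumes "causal \<tau>" "(x, y) \<in> Omega_e \<tau> j"
  obtains w where "w \<in> Lw \<tau> j" "data (\<tau> ! w) = data (\<tau> ! y)"
    "data (\<tau> ! x) = 0 \<or> x = w \<or> (\<exists>a \<in> Lw \<tau> j. a < w \<and> data (\<tau> ! a) = data (\<tau> ! x))"
proof -
  have x: "x \<in> L \<tau> j" and y: "y \<in> L \<tau> j" using assms(2) unfolding Omega_e_def by auto
  consider (read_from) "data (\<tau> ! x) = data (\<tau> ! y)" "op (\<tau> ! x) = W"
    | (initial) "data (\<tau> ! x) = 0" "data (\<tau> ! y) \<noteq> 0"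
    | (ordered) a b where "b \<in> Lw \<tau> j" "a \<in> Lw \<tau> j" "a < b"
        "data (\<tau> ! a) = data (\<tau> ! x)" "data (\<tau> ! b) = data (\<tau> ! y)"
    using assms(2) unfolding Omega_e_def Omega_def by auto
  then show ?thesis
  proof cases
    case read_from
    then show ?thesis using that[of x] x unfolding Lw_def by auto
  next
    case initial
    then show ?thesis using that causal_writer[OF assms(1) y] by metis
  next
    case ordered
    then show ?thesis using that by blast
  qed
qed

definition pivot_renaming :: "event list \<Rightarrow> nat \<Rightarrow> (nat \<Rightarrow> nat) \<Rightarrow> nat \<Rightarrow> nat \<Rightarrow> nat" where
  "pivot_renaming \<tau> k w j d =
     (if j \<in> {1..k} \<and> d \<noteq> 0 then
        (if d = data (\<tau> ! w j) then 1
         else if \<exists>p \<in> Lw \<tau> j. w j < p \<and> data (\<tau> ! p) = d then 2 else 0)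
      else 0)"

lemma pivot_renaming_zero [simp]: "pivot_renaming \<tau> k w j 0 = 0"
  by (simp add: pivot_renaming_def)

lemma renaming_pivot_renaming: "renaming m 2 (pivot_renaming \<tau> k w)"
  by (simp add: renaming_def pivot_renaming_def)

lemma pivot_renaming_write:
  assumes "unambiguous \<tau>" "j \<in> {1..k}" "w j \<in> Lw \<tau> j" "p \<in> Lw \<tau> j"
  shows "pivot_renaming \<tau> k w j (data (\<tau> ! p)) = (if p < w j then 0 else if p = w j then 1 else 2)"
proof -
  have inj: "q = p" if "q \<in> Lw \<tau> j" "data (\<tau> ! q) = data (\<tau> ! p)" for q
    using unambiguous_write_eq[OF assms(1) that(1) assms(4)] that(2) .
  have "data (\<tau> ! p) \<noteq> 0" using unambiguous_write_nonzero[OF assms(1,4)] .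
  then show ?thesis
    using assms(2-4) inj[of "w j"] inj unfolding pivot_renaming_def
    by (cases p "w j" rule: linorder_cases) (auto, metis less_asym)
qed

lemma pivot_renaming_Constrain:
  assumes "unambiguous \<tau>" "\<forall>j \<in> {1..k}. w j \<in> Lw \<tau> j"
    and "rename_data (pivot_renaming \<tau> k w) \<tau> \<in> lists (E n m 2)"
  shows "rename_data (pivot_renaming \<tau> k w) \<tau> \<in> Constrain n m k j"
proof (cases "j \<in> {1..k}")
  case True
  let ?Q = "\<lambda>e. op e = W \<and> loc e = j"
  have "w j < length \<tau>" "?Q (\<tau> ! w j)"
    using assms(2) True by (auto simp: Lw_def L_def Pos_def)
  moreover have "pivot_renaming \<tau> k w j (data (\<tau> ! p)) = (if p < w j then 0 else if p = w j then 1 else 2)"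
    if "p < length \<tau>" "?Q (\<tau> ! p)" for p
    using pivot_renaming_write[OF assms(1) True] assms(2) True that by (simp add: Lw_def L_def Pos_def)
  ultimately have "\<exists>r s. write_data j (rename_data (pivot_renaming \<tau> k w) \<tau>) = replicate r 0 @ [1] @ replicate s 2"
    unfolding write_data_rename_data by (intro map_filter_eq_three_blocks)
  then show ?thesis using assms(3) True unfolding Constrain_def by auto
next
  case False
  then show ?thesis using assms(3) unfolding Constrain_def rename_data_def pivot_renaming_def by auto
qed

lemma pivot_renaming_Check:
  assumes "unambiguous \<tau>" "i \<in> {1..k}" "w i \<in> Lw \<tau> i" "w (oplus k i) \<in> Lw \<tau> (oplus k i)"
    and "(x, y) \<in> M \<tau> i" "x \<in> L \<tau> i" "y \<in> L \<tau> (oplus k i)"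
    and "data (\<tau> ! x) = data (\<tau> ! w i)"
    and "data (\<tau> ! y) = 0 \<or> y = w (oplus k i) \<or>
      (\<exists>a \<in> Lw \<tau> (oplus k i). a < w (oplus k i) \<and> data (\<tau> ! a) = data (\<tau> ! y))"
    and "rename_data (pivot_renaming \<tau> k w) \<tau> \<in> lists (E n m 2)"
  shows "rename_data (pivot_renaming \<tau> k w) \<tau> \<in> Check n m k i"
proof -
  let ?lam = "pivot_renaming \<tau> k w" and ?j = "oplus k i"
  have j: "?j \<in> {1..k}" using oplus_mem[OF assms(2)] .
  have "?lam i (data (\<tau> ! x)) = 1"
    using pivot_renaming_write[where w = w and p = "w i", OF assms(1,2,3,3)] assms(8) by simp
  moreover have "?lam ?j (data (\<tau> ! y)) = 0 \<or> op (\<tau> ! y) = W \<and> ?lam ?j (data (\<tau> ! y)) = 1"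
    using assms(9)
  proof (elim disjE bexE conjE)
    assume "y = w ?j"
    then show ?thesis using pivot_renaming_write[where w = w and p = "w ?j", OF assms(1) j assms(4,4)] assms(4)
      by (simp add: Lw_def)
  next
    fix a assume "a \<in> Lw \<tau> ?j" "a < w ?j" "data (\<tau> ! a) = data (\<tau> ! y)"
    then show ?thesis using pivot_renaming_write[where w = w, OF assms(1) j assms(4)] by metis
  qed simp
  moreover have "x < y" "y < length \<tau>" "proc (\<tau> ! x) = i" "proc (\<tau> ! y) = i"
    "loc (\<tau> ! x) = i" "loc (\<tau> ! y) = ?j"
    using assms(5-7) by (auto simp: M_def P_def L_def Pos_def)
  ultimately show ?thesis
    using assms(10) unfolding Check_def by (intro CollectI conjI exI[of _ x] exI[of _ y]) auto
qed

lemma nice_cycle_pivots: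
  assumes "causal \<tau>" "canonical_nice_cycle k \<tau> u v"
  obtains w where
    "\<forall>j \<in> {1..k}. w j \<in> Lw \<tau> j \<and> u j \<in> L \<tau> j \<and> data (\<tau> ! w j) = data (\<tau> ! u j)"
    "\<forall>x \<in> {1..k}. data (\<tau> ! v x) = 0 \<or> v x = w (oplus k x) \<or>
      (\<exists>a \<in> Lw \<tau> (oplus k x). a < w (oplus k x) \<and> data (\<tau> ! a) = data (\<tau> ! v x))"
proof -
  have edge: "(v x, u (oplus k x)) \<in> Omega_e \<tau> (oplus k x)" if "x \<in> {1..k}" for x
    using assms(2) that unfolding canonical_nice_cycle_def by auto
  have "\<forall>x \<in> {1..k}. \<exists>w. w \<in> Lw \<tau> (oplus k x) \<and> data (\<tau> ! w) = data (\<tau> ! u (oplus k x)) \<and>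
     (data (\<tau> ! v x) = 0 \<or> v x = w \<or>
      (\<exists>a \<in> Lw \<tau> (oplus k x). a < w \<and> data (\<tau> ! a) = data (\<tau> ! v x)))"
    using Omega_e_source_write[OF assms(1) edge] by metis
  then obtain w' where w': "\<forall>x \<in> {1..k}. w' x \<in> Lw \<tau> (oplus k x) \<and>
     data (\<tau> ! w' x) = data (\<tau> ! u (oplus k x)) \<and>
     (data (\<tau> ! v x) = 0 \<or> v x = w' x \<or>
      (\<exists>a \<in> Lw \<tau> (oplus k x). a < w' x \<and> data (\<tau> ! a) = data (\<tau> ! v x)))"
    by (rule bchoice[THEN exE]) blast
  define pred where "pred = inv_into {1..k} (oplus k)"
  have pred: "pred j \<in> {1..k}" "oplus k (pred j) = j" if "j \<in> {1..k}" for j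
    using bij_betw_oplus that unfolding pred_def
    by (metis bij_betwE bij_betw_inv_into, metis bij_betw_inv_into_right)
  have pred_oplus: "pred (oplus k x) = x" if "x \<in> {1..k}" for x
    using bij_betw_oplus that unfolding pred_def by (metis bij_betw_inv_into_left)
  show ?thesis
  proof (rule that[of "w' \<circ> pred"]; intro ballI)
    fix j assume j: "j \<in> {1..k}"
    have "u j \<in> L \<tau> j"
      using edge[OF pred(1)[OF j]] pred(2)[OF j] unfolding Omega_e_def by auto
    moreover have "w' (pred j) \<in> Lw \<tau> j" "data (\<tau> ! w' (pred j)) = data (\<tau> ! u j)"
      using w' pred[OF j] by metis+
    ultimately show "(w' \<circ> pred) j \<in> Lw \<tau> j \<and> u j \<in> L \<tau> j \<and> data (\<tau> ! (w' \<circ> pred) j) = data (\<tau> ! u j)"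
      by simp
  next
    fix x assume "x \<in> {1..k}"
    then show "data (\<tau> ! v x) = 0 \<or> v x = (w' \<circ> pred) (oplus k x) \<or>
      (\<exists>a \<in> Lw \<tau> (oplus k x). a < (w' \<circ> pred) (oplus k x) \<and> data (\<tau> ! a) = data (\<tau> ! v x))"
      using w' pred_oplus by simp
  qed
qed

lemma nice_cycle_imp_Constrain_Check:
  assumes "causal \<tau>" "unambiguous \<tau>" "has_canonical_nice_cycle k \<tau>" "\<tau> \<in> lists (E n m v)"
  obtains lam where "renaming m 2 lam"
    "\<forall>j \<in> {1..m}. rename_data lam \<tau> \<in> Constrain n m k j"
    "\<forall>i \<in> {1..k}. rename_data lam \<tau> \<in> Check n m k i"
proof -
  obtain u v where cyc: "canonical_nice_cycle k \<tau> u v"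
    using assms(3) unfolding has_canonical_nice_cycle_def by blast
  obtain w where pivot:
    "\<forall>j \<in> {1..k}. w j \<in> Lw \<tau> j \<and> u j \<in> L \<tau> j \<and> data (\<tau> ! w j) = data (\<tau> ! u j)"
    "\<forall>x \<in> {1..k}. data (\<tau> ! v x) = 0 \<or> v x = w (oplus k x) \<or>
      (\<exists>a \<in> Lw \<tau> (oplus k x). a < w (oplus k x) \<and> data (\<tau> ! a) = data (\<tau> ! v x))"
    using nice_cycle_pivots[OF assms(1) cyc] by blast
  let ?lam = "pivot_renaming \<tau> k w"
  have E: "rename_data ?lam \<tau> \<in> lists (E n m 2)"
    using rename_data_in_lists_E[OF assms(4) renaming_pivot_renaming] .
  have "rename_data ?lam \<tau> \<in> Check n m k i" if i: "i \<in> {1..k}" for i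
  proof (rule pivot_renaming_Check[OF assms(2) i _ _ _ _ _ _ _ E])
    have "(v i, u (oplus k i)) \<in> Omega_e \<tau> (oplus k i)" "(u i, v i) \<in> M \<tau> i"
      using cyc i unfolding canonical_nice_cycle_def by auto
    then show "v i \<in> L \<tau> (oplus k i)" "(u i, v i) \<in> M \<tau> i"
      unfolding Omega_e_def by auto
  qed (use pivot i oplus_mem[OF i] in auto)
  then show ?thesis
    using that renaming_pivot_renaming pivot_renaming_Constrain[OF assms(2) _ E] pivot(1) by blast
qed

lemma canonical_nice_cycleI:
  assumes "\<forall>x \<in> {1..k}. (u x, v x) \<in> M \<tau> x \<and> (v x, u (oplus k x)) \<in> Omega_e \<tau> (oplus k x)"
  shows "canonical_nice_cycle k \<tau> u v"
proof -
  have uv: "u x < v x" "proc (\<tau> ! u x) = x" "proc (\<tau> ! v x) = x" if "x \<in> {1..k}" for x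
    using assms that by (auto simp: M_def P_def)
  have "u ` {1..k} \<inter> v ` {1..k} = {}"
  proof (rule equals0I)
    fix z assume "z \<in> u ` {1..k} \<inter> v ` {1..k}"
    then obtain x y where "x \<in> {1..k}" "y \<in> {1..k}" "u x = v y" by blast
    moreover from this have "x = y" using uv by metis
    ultimately show False using uv by (metis less_irrefl)
  qed
  moreover have "inj_on u {1..k}" "inj_on v {1..k}" using uv by (metis inj_onI)+
  ultimately show ?thesis using assms unfolding canonical_nice_cycle_def by blast
qed

lemma Check_rename_dataE:
  assumes "rename_data lam \<tau> \<in> Check n m k i"
  obtains x y where "(x, y) \<in> M \<tau> i" "loc (\<tau> ! x) = i" "loc (\<tau> ! y) = oplus k i"
    "lam i (data (\<tau> ! x)) \<in> {1, 2}"
    "lam (oplus k i) (data (\<tau> ! y)) = 0 \<or> op (\<tau> ! y) = W \<and> lam (oplus k i) (data (\<tau> ! y)) = 1"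
proof -
  obtain x y where "x < y" "y < length \<tau>" and
    "proc (rename_data lam \<tau> ! x) = i" "loc (rename_data lam \<tau> ! x) = i"
    "data (rename_data lam \<tau> ! x) \<in> {1, 2}"
    "proc (rename_data lam \<tau> ! y) = i" "loc (rename_data lam \<tau> ! y) = oplus k i"
    "data (rename_data lam \<tau> ! y) = 0 \<or>
     op (rename_data lam \<tau> ! y) = W \<and> data (rename_data lam \<tau> ! y) = 1"
    using assms unfolding Check_def by auto
  then show ?thesis using that[of x y] by (simp add: M_def P_def Pos_def)
qed

lemma Constrain_Check_imp_nice_cycle:
  assumes "causal \<tau>" "\<forall>j \<in> {1..k}. lam j 0 = 0"
    and "\<forall>j \<in> {1..k}. rename_data lam \<tau> \<in> Constrain n m k j"
    and "\<forall>i \<in> {1..k}. rename_data lam \<tau> \<in> Check n m k i"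
  shows "has_canonical_nice_cycle k \<tau>"
proof -
  have "\<forall>i \<in> {1..k}. \<exists>x y. (x, y) \<in> M \<tau> i \<and> loc (\<tau> ! x) = i \<and> loc (\<tau> ! y) = oplus k i \<and>
      lam i (data (\<tau> ! x)) \<in> {1, 2} \<and>
      (lam (oplus k i) (data (\<tau> ! y)) = 0 \<or> op (\<tau> ! y) = W \<and> lam (oplus k i) (data (\<tau> ! y)) = 1)"
    using assms(4) Check_rename_dataE by metis
  then obtain u v where uv: "\<forall>i \<in> {1..k}. (u i, v i) \<in> M \<tau> i \<and>
      loc (\<tau> ! u i) = i \<and> loc (\<tau> ! v i) = oplus k i \<and> lam i (data (\<tau> ! u i)) \<in> {1, 2} \<and>
      (lam (oplus k i) (data (\<tau> ! v i)) = 0 \<or>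
       op (\<tau> ! v i) = W \<and> lam (oplus k i) (data (\<tau> ! v i)) = 1)"
    by metis
  have ordered: "constrain_le (lam j (data (\<tau> ! p))) (lam j (data (\<tau> ! q)))"
    if "j \<in> {1..k}" "p \<in> Lw \<tau> j" "q \<in> Lw \<tau> j" "p < q" for j p q
  proof -
    have "constrain_le (data (rename_data lam \<tau> ! p)) (data (rename_data lam \<tau> ! q))"
      using Constrain_writes_ordered[of "rename_data lam \<tau>" n m k j p q] assms(3) that by simp
    then show ?thesis using that(2,3) by (simp add: Lw_def L_def Pos_def)
  qed
  have "(v x, u (oplus k x)) \<in> Omega_e \<tau> (oplus k x)" if x: "x \<in> {1..k}" for x
  proof -
    have j: "oplus k x \<in> {1..k}" using oplus_mem[OF x] .
    have "u (oplus k x) < length \<tau>" "v x < length \<tau>"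
      using uv x j unfolding M_def P_def Pos_def by auto
    then have L: "v x \<in> L \<tau> (oplus k x)" "u (oplus k x) \<in> L \<tau> (oplus k x)"
      using uv x j by (auto simp: L_def Pos_def)
    have "u x < v x" "proc (\<tau> ! v x) = x" "proc (\<tau> ! u (oplus k x)) = oplus k x"
      using uv x j by (auto simp: M_def P_def)
    then have "v x \<noteq> u (oplus k x)" by (metis less_irrefl)
    then show ?thesis
      using Omega_e_if_ranked[where g = "lam (oplus k x)", OF assms(1) ordered[OF j] _ L] assms(2) uv x j
      by auto
  qed
  then show ?thesis
    using uv canonical_nice_cycleI unfolding has_canonical_nice_cycle_def by blast
qed

theorem theorem8p1:
  fixes S :: "'i memsys" and n m k :: nat
  assumes "memory_system S" and "causality S" and "data_independence S"
    and "n \<ge> 1" and "m \<ge> 1" and "1 \<le> k" and "k \<le> min n m"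
  shows "(\<exists>\<tau>. \<tau> \<in> traces S n m \<and> unambiguous \<tau> \<and> has_canonical_nice_cycle k \<tau>)
     \<longleftrightarrow> (\<exists>\<tau>'. \<tau>' \<in> traces_v S n m 2 \<and>
            (\<forall>j \<in> {1..m}. \<tau>' \<in> Constrain n m k j) \<and>
            (\<forall>i \<in> {1..k}. \<tau>' \<in> Check n m k i))"
proof
  assume "\<exists>\<tau>. \<tau> \<in> traces S n m \<and> unambiguous \<tau> \<and> has_canonical_nice_cycle k \<tau>"
  then obtain \<tau> where \<tau>: "\<tau> \<in> traces S n m" "unambiguous \<tau>" "has_canonical_nice_cycle k \<tau>"
    by blast
  obtain v where "\<tau> \<in> lists (E n m v)"
    using \<tau>(1) traces_v_in_lists_E[OF assms(1,4,5)] unfolding traces_def by blast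
  with \<tau> causality_imp_causal[OF assms(2,4,5)] obtain lam where lam: "renaming m 2 lam"
    "\<forall>j \<in> {1..m}. rename_data lam \<tau> \<in> Constrain n m k j"
    "\<forall>i \<in> {1..k}. rename_data lam \<tau> \<in> Check n m k i"
    by (metis nice_cycle_imp_Constrain_Check)
  have "rename_data lam \<tau> \<in> traces_v S n m 2"
    using traces_v_iff_renamed[OF assms(1,3-5)] lam(1,2) \<tau>(1,2) assms(5)
    unfolding Constrain_def by auto
  with lam show "\<exists>\<tau>'. \<tau>' \<in> traces_v S n m 2 \<and> (\<forall>j \<in> {1..m}. \<tau>' \<in> Constrain n m k j) \<and>
      (\<forall>i \<in> {1..k}. \<tau>' \<in> Check n m k i)" by blast
next
  assume "\<exists>\<tau>'. \<tau>' \<in> traces_v S n m 2 \<and> (\<forall>j \<in> {1..m}. \<tau>' \<in> Constrain n m k j) \<and>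
      (\<forall>i \<in> {1..k}. \<tau>' \<in> Check n m k i)"
  then obtain \<tau> lam where \<tau>: "\<tau> \<in> traces S n m" "unambiguous \<tau>" "renaming m 2 lam"
    and cc: "\<forall>j \<in> {1..m}. rename_data lam \<tau> \<in> Constrain n m k j"
      "\<forall>i \<in> {1..k}. rename_data lam \<tau> \<in> Check n m k i"
    using traces_v_iff_renamed[OF assms(1,3-5)] by auto
  have "\<forall>j \<in> {1..k}. lam j 0 = 0" "\<forall>j \<in> {1..k}. rename_data lam \<tau> \<in> Constrain n m k j"
    using \<tau>(3) cc(1) assms(7) unfolding renaming_def by auto
  then have "has_canonical_nice_cycle k \<tau>"
    using Constrain_Check_imp_nice_cycle causality_imp_causal[OF assms(2,4,5) \<tau>(1)] cc(2) by blast
  with \<tau> show "\<exists>\<tau>. \<tau> \<in> traces S n m \<and> unambiguous \<tau> \<and> has_canonical_nice_cycle k \<tau>" by blast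
qed

end
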